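(* Let $S$ be a Riemann surface with boundary and $\Gamma$ a connected finite oriented graph embedded in $S$ such that $\#h^{-1}(v)\ge1$ and $\#t^{-1}(v)\ge1$ for each vertex $v$. Let $D$ be an embedded disk in $S$ whose boundary $\mathrm{Bd}(D)$, with the orientation induced from $D$, is a path in $\Gamma$. If $\mathrm{Int}(D)\cap\Gamma\neq\emptyset$, then there exists a simple closed path of $\Gamma$ in $D$ not equal to $\mathrm{Bd}(D)$.
   Context: A Riemann surface with boundary is a compact oriented surface, possibly with boundary. An oriented graph $\Gamma=(V,E)$ has head and tail maps $h,t:E\to V$, and is viewed as a topological space. A path is a sequence of edges $e_1,\dots,e_n$ with $h(e_i)=t(e_{i+1})$; it is closed if $h(e_n)=t(e_1)$, and simple if it has no self-intersection. *)

theory Defs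
  imports "HOL-Analysis.Analysis" "HOL-Homology.Homology"
begin

definition surface_with_boundary :: "'a topology \<Rightarrow> bool" where
  "surface_with_boundary X \<longleftrightarrow> compact_space X \<and> Hausdorff_space X \<and>
     (\<forall>x\<in>topspace X. \<exists>U. openin X U \<and> x \<in> U \<and>
        (\<exists>W. openin (top_of_set {z::complex. Im z \<ge> 0}) W \<and>
             subtopology X U homeomorphic_space top_of_set W))"

definition manifold_interior :: "'a topology \<Rightarrow> 'a set" where
  "manifold_interior X = {x \<in> topspace X. \<exists>U. openin X U \<and> x \<in> U \<and>
        (\<exists>W::complex set. open W \<and> subtopology X U homeomorphic_space top_of_set W)}"

text \<open>Orientability via local homology: a locally consistent choice of generators
  of the local homology groups H_2(X, X - {x}) at interior points.\<close>
definition orientable_surface :: "'a topology \<Rightarrow> bool" where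
  "orientable_surface X \<longleftrightarrow>
     (\<exists>\<mu>. \<forall>x\<in>manifold_interior X.
        \<mu> x \<in> carrier (relative_homology_group 2 X (topspace X - {x})) \<and>
        (\<forall>a\<in>carrier (relative_homology_group 2 X (topspace X - {x})).
            \<exists>n::int. a = \<mu> x [^]\<^bsub>relative_homology_group 2 X (topspace X - {x})\<^esub> n) \<and>
        (\<exists>U. openin X U \<and> x \<in> U \<and> U \<subseteq> manifold_interior X \<and>
           (\<exists>c\<in>carrier (relative_homology_group 2 X (topspace X - U)).
              \<forall>y\<in>U. hom_induced 2 X (topspace X - U) X (topspace X - {y}) id c = \<mu> y)))"

definition riemann_surface_with_boundary :: "'a topology \<Rightarrow> bool" where
  "riemann_surface_with_boundary X \<longleftrightarrow> surface_with_boundary X \<and> orientable_surface X"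

text \<open>Finite oriented graph (V, E, h, t) embedded in X: vertex v sits at pos v, edge e is the
  image of eg e on [0,1], running from pos (t e) to pos (h e); arcs are injective on the open
  interval, their open parts avoid vertices and are pairwise disjoint.\<close>
definition embedded_graph ::
  "'a topology \<Rightarrow> 'v set \<Rightarrow> 'e set \<Rightarrow> ('e \<Rightarrow> 'v) \<Rightarrow> ('e \<Rightarrow> 'v) \<Rightarrow> ('v \<Rightarrow> 'a) \<Rightarrow> ('e \<Rightarrow> real \<Rightarrow> 'a) \<Rightarrow> bool"
  where
  "embedded_graph X V E h t pos eg \<longleftrightarrow>
     finite V \<and> finite E \<and> h ` E \<subseteq> V \<and> t ` E \<subseteq> V \<and>
     inj_on pos V \<and> pos ` V \<subseteq> topspace X \<and>
     (\<forall>e\<in>E. continuous_map (top_of_set {0..1}) X (eg e) \<and>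
        eg e 0 = pos (t e) \<and> eg e 1 = pos (h e) \<and>
        inj_on (eg e) {0<..<1} \<and> eg e ` {0<..<1} \<inter> pos ` V = {}) \<and>
     (\<forall>e\<in>E. \<forall>e'\<in>E. e \<noteq> e' \<longrightarrow> eg e ` {0<..<1} \<inter> eg e' ` {0<..<1} = {})"

definition edge_set :: "('e \<Rightarrow> real \<Rightarrow> 'a) \<Rightarrow> 'e \<Rightarrow> 'a set" where
  "edge_set eg e = eg e ` {0..1}"

definition graph_set :: "'v set \<Rightarrow> 'e set \<Rightarrow> ('v \<Rightarrow> 'a) \<Rightarrow> ('e \<Rightarrow> real \<Rightarrow> 'a) \<Rightarrow> 'a set" where
  "graph_set V E pos eg = pos ` V \<union> (\<Union>e\<in>E. edge_set eg e)"

definition graph_connected :: "'v set \<Rightarrow> 'e set \<Rightarrow> ('e \<Rightarrow> 'v) \<Rightarrow> ('e \<Rightarrow> 'v) \<Rightarrow> bool" where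
  "graph_connected V E h t \<longleftrightarrow>
     V \<noteq> {} \<and>
     (\<forall>u\<in>V. \<forall>v\<in>V. (u, v) \<in> ({(t e, h e) | e. e \<in> E} \<union> {(h e, t e) | e. e \<in> E})\<^sup>*)"

definition is_path :: "'e set \<Rightarrow> ('e \<Rightarrow> 'v) \<Rightarrow> ('e \<Rightarrow> 'v) \<Rightarrow> 'e list \<Rightarrow> bool" where
  "is_path E h t es \<longleftrightarrow> es \<noteq> [] \<and> set es \<subseteq> E \<and>
     (\<forall>i. Suc i < length es \<longrightarrow> h (es ! i) = t (es ! Suc i))"

definition is_closed_path :: "'e set \<Rightarrow> ('e \<Rightarrow> 'v) \<Rightarrow> ('e \<Rightarrow> 'v) \<Rightarrow> 'e list \<Rightarrow> bool" where
  "is_closed_path E h t es \<longleftrightarrow> is_path E h t es \<and> h (last es) = t (hd es)"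

definition is_simple_closed_path :: "'e set \<Rightarrow> ('e \<Rightarrow> 'v) \<Rightarrow> ('e \<Rightarrow> 'v) \<Rightarrow> 'e list \<Rightarrow> bool" where
  "is_simple_closed_path E h t es \<longleftrightarrow> is_closed_path E h t es \<and> distinct (map t es)"

definition path_set :: "('e \<Rightarrow> real \<Rightarrow> 'a) \<Rightarrow> 'e list \<Rightarrow> 'a set" where
  "path_set eg es = (\<Union>e\<in>set es. edge_set eg e)"

definition embedded_disk :: "'a topology \<Rightarrow> (complex \<Rightarrow> 'a) \<Rightarrow> bool" where
  "embedded_disk X \<phi> \<longleftrightarrow> embedding_map (top_of_set (cball 0 1)) X \<phi>"

text \<open>The boundary circle of the disk, traversed once counterclockwise (the orientation induced
  from the disk, parametrized through \<phi>), is the closed path es: the circle splits into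
  consecutive arcs [\<theta> i, \<theta> (i+1)] which are increasing reparametrizations of the edges es!i.\<close>
definition boundary_is_path ::
  "'e set \<Rightarrow> ('e \<Rightarrow> 'v) \<Rightarrow> ('e \<Rightarrow> 'v) \<Rightarrow> ('e \<Rightarrow> real \<Rightarrow> 'a) \<Rightarrow> (complex \<Rightarrow> 'a) \<Rightarrow> 'e list \<Rightarrow> bool"
  where
  "boundary_is_path E h t eg \<phi> es \<longleftrightarrow> is_closed_path E h t es \<and>
     (\<exists>\<theta>::nat \<Rightarrow> real. \<theta> (length es) = \<theta> 0 + 2 * pi \<and>
        (\<forall>i<length es. \<theta> i < \<theta> (Suc i) \<and>
           (\<exists>r. continuous_on {\<theta> i..\<theta> (Suc i)} r \<and> strict_mono_on {\<theta> i..\<theta> (Suc i)} r \<and>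
                r ` {\<theta> i..\<theta> (Suc i)} = {0..1} \<and>
                (\<forall>s\<in>{\<theta> i..\<theta> (Suc i)}. \<phi> (cis s) = eg (es ! i) (r s)))))"

end

theory Submission
  imports Defs
begin

text \<open>Call the vertices inside the open disk inner (IV), the edges whose open arcs lie inside it
  inner (IE), and the tails of the boundary path rim vertices (BV). The open disk is open in S
  (invariance of domain) and the closed disk is closed, so an open arc which meets the interior
  and misses the boundary circle stays inside. Hence every edge at an inner vertex is inner, the
  endpoints of inner edges lie in IV \<union> BV, and IE is nonempty. In the digraph formed by IE and the
  boundary edges every inner vertex has an incoming and an outgoing inner edge, and BV is strongly
  connected. So some inner edge lies on a cycle: otherwise, by finiteness, walking backwards along
  inner edges from its tail and forwards from its head reaches BV, and a path through BV closes
  the cycle. Shortcutting repeated vertices makes the cycle simple; it lies in the disk and, as it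
  runs through the interior, it is not the boundary.\<close>

section \<open>Arcs and disks in a topological space\<close>

lemma connectedin_subset_openin_of_rim_disjoint:
  assumes "openin X A" "closedin X K" "A \<subseteq> K" "connectedin X C" "C \<inter> (K - A) = {}" "C \<inter> A \<noteq> {}"
  shows "C \<subseteq> A"
proof -
  have C: "C \<subseteq> A \<union> (topspace X - K)"
    using assms(5) connectedin_subset_topspace[OF assms(4)] by blast
  have "openin X (topspace X - K)" using assms(2) unfolding closedin_def by blast
  have "(topspace X - K) \<inter> C = {}"
  proof (rule ccontr)
    assume "(topspace X - K) \<inter> C \<noteq> {}"
    then show False
      using connectedinD[OF assms(4,1) \<open>openin X (topspace X - K)\<close> C] assms(3,6) by blast
  qed
  then show ?thesis using C by blast
qed

lemma connectedin_open_arc: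
  assumes "continuous_map (top_of_set {0..1}) X g"
  shows "connectedin X (g ` {0<..<1::real})"
proof -
  have "connectedin (top_of_set {0..1}) {0<..<(1::real)}"
    by (simp add: connectedin_subtopology greaterThanLessThan_subseteq_atLeastAtMost_iff)
  then show ?thesis by (rule connectedin_continuous_map_image[OF assms])
qed

lemma open_arc_meets_openin:
  assumes g: "continuous_map (top_of_set {0..1}) X g" and "openin X A" "s \<in> {0..1::real}" "g s \<in> A"
  shows "g ` {0<..<1} \<inter> A \<noteq> {}"
proof -
  have "openin (top_of_set {0..1}) {s \<in> {0..1}. g s \<in> A}"
    using openin_continuous_map_preimage[OF g \<open>openin X A\<close>] by simp
  then obtain T where T: "open T" "{s \<in> {0..1}. g s \<in> A} = T \<inter> {0..1}"
    by (auto simp: openin_open)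
  have "s \<in> T" using T(2) assms(3,4) by blast
  then have "s \<in> T \<inter> closure {0<..<1}" using assms(3) by simp
  then have "T \<inter> {0<..<1} \<noteq> {}" using open_Int_closure_eq_empty[OF T(1)] by blast
  then obtain u where u: "u \<in> T" "u \<in> {0<..<1}" by blast
  then have "u \<in> {s \<in> {0..1}. g s \<in> A}" unfolding T(2) by simp
  with u(2) show ?thesis by blast
qed

lemma closedin_contains_arc_of_open_arc:
  assumes g: "continuous_map (top_of_set {0..1}) X g" and "closedin X K" "g ` {0<..<1::real} \<subseteq> K"
  shows "g ` {0..1} \<subseteq> K"
proof -
  have "closedin (top_of_set {0..1}) {s \<in> {0..1}. g s \<in> K}"
    using closedin_continuous_map_preimage[OF g \<open>closedin X K\<close>] by simp
  then have "closed {s \<in> {0..1::real}. g s \<in> K}"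
    using closedin_closed_trans closed_atLeastAtMost by blast
  moreover have "{0<..<1} \<subseteq> {s \<in> {0..1::real}. g s \<in> K}" using assms(3) by auto
  ultimately have "closure {0<..<1} \<subseteq> {s \<in> {0..1::real}. g s \<in> K}"
    by (rule closure_minimal[rotated])
  then have "{0..1::real} \<subseteq> {s \<in> {0..1}. g s \<in> K}" by simp
  then show ?thesis by blast
qed

lemma embedded_disk_imp_continuous_map:
  "embedded_disk X \<phi> \<Longrightarrow> continuous_map (top_of_set (cball 0 1)) X \<phi>"
  unfolding embedded_disk_def embedding_map_def
  by (meson continuous_map_from_subtopology_mono continuous_map_in_subtopology homeomorphic_imp_continuous_map)

lemma embedded_disk_imp_inj_on: "embedded_disk X \<phi> \<Longrightarrow> inj_on \<phi> (cball 0 1)"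
  unfolding embedded_disk_def embedding_map_def
  using homeomorphic_imp_injective_map by fastforce

lemma closedin_embedded_disk:
  assumes "Hausdorff_space X" "embedded_disk X \<phi>"
  shows "closedin X (\<phi> ` cball 0 1)"
proof -
  have "compactin (top_of_set (cball (0::complex) 1)) (cball 0 1)"
    by (simp add: compactin_subtopology)
  then have "compactin X (\<phi> ` cball 0 1)"
    using image_compactin embedded_disk_imp_continuous_map[OF assms(2)] by blast
  then show ?thesis using compactin_imp_closedin assms(1) by blast
qed

lemma openin_image_in_chart:
  fixes W S :: "complex set"
  assumes U: "openin X U" and fg: "homeomorphic_maps (subtopology X U) (top_of_set W) f g"
    and \<phi>: "continuous_map (top_of_set S) X \<phi>" "inj_on \<phi> S" "\<phi> ` S \<subseteq> U" and "open S"
  shows "openin X (\<phi> ` S)"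
proof -
  have UX: "topspace (subtopology X U) = U" using openin_subset[OF U] by (simp add: Int_absorb1)
  have f: "continuous_map (subtopology X U) (top_of_set W) f" and gf: "\<And>y. y \<in> U \<Longrightarrow> g (f y) = y"
    using fg UX unfolding homeomorphic_maps_def by auto
  have "continuous_map (top_of_set S) (subtopology X U) \<phi>"
    using \<phi> by (simp add: continuous_map_in_subtopology image_subset_iff_funcset)
  then have "continuous_map (top_of_set S) (top_of_set W) (f \<circ> \<phi>)"
    using f by (rule continuous_map_compose)
  then have cont: "continuous_on S (f \<circ> \<phi>)" and into: "(f \<circ> \<phi>) ` S \<subseteq> W"
    by (auto simp: continuous_map_in_subtopology)
  have inj: "inj_on (f \<circ> \<phi>) S"
  proof (rule inj_onI)
    fix u w assume uw: "u \<in> S" "w \<in> S" "(f \<circ> \<phi>) u = (f \<circ> \<phi>) w"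
    then have "\<phi> u = \<phi> w" using gf \<phi>(3) by (metis comp_apply image_subset_iff)
    then show "u = w" using \<phi>(2) uw by (meson inj_onD)
  qed
  have "open ((f \<circ> \<phi>) ` S)" using invariance_of_domain[OF cont \<open>open S\<close> inj] .
  then have "openin (top_of_set W) ((f \<circ> \<phi>) ` S)"
    using into by (auto simp: openin_open)
  then have "openin (subtopology X U) {y \<in> U. f y \<in> (f \<circ> \<phi>) ` S}"
    using openin_continuous_map_preimage[OF f] UX by metis
  moreover have "{y \<in> U. f y \<in> (f \<circ> \<phi>) ` S} = \<phi> ` S"
  proof (intro equalityI subsetI)
    fix y assume "y \<in> {y \<in> U. f y \<in> (f \<circ> \<phi>) ` S}"
    then obtain w where "y \<in> U" "w \<in> S" "f y = f (\<phi> w)" by auto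
    then have "y = \<phi> w" using gf \<phi>(3) by (metis image_subset_iff)
    then show "y \<in> \<phi> ` S" using \<open>w \<in> S\<close> by blast
  qed (use \<phi>(3) in auto)
  ultimately show ?thesis using U openin_trans_full by metis
qed

lemma openin_image_into_surface:
  fixes S :: "complex set"
  assumes X: "surface_with_boundary X" and \<phi>: "continuous_map (top_of_set S) X \<phi>" "inj_on \<phi> S"
    and "open S"
  shows "openin X (\<phi> ` S)"
proof (subst openin_subopen, intro ballI)
  fix x assume "x \<in> \<phi> ` S"
  then obtain z where z: "z \<in> S" "x = \<phi> z" by blast
  then have "x \<in> topspace X" using continuous_map_image_subset_topspace[OF \<phi>(1)] by auto
  then obtain U W f g where U: "openin X U" "x \<in> U"
    and fg: "homeomorphic_maps (subtopology X U) (top_of_set (W :: complex set)) f g"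
    using X unfolding surface_with_boundary_def homeomorphic_space_def by meson
  define B where "B = {w \<in> S. \<phi> w \<in> U}"
  have "openin (top_of_set S) B"
    using openin_continuous_map_preimage[OF \<phi>(1) U(1)] by (simp add: B_def)
  then have "open B" using \<open>open S\<close> openin_open_trans by blast
  moreover have "continuous_map (top_of_set B) X \<phi>"
    using continuous_map_from_subtopology_mono[OF \<phi>(1)] by (auto simp: B_def)
  moreover have "inj_on \<phi> B" using \<phi>(2) by (auto simp: B_def inj_on_def)
  ultimately have "openin X (\<phi> ` B)"
    using openin_image_in_chart[OF U(1) fg] by (auto simp: B_def)
  moreover have "x \<in> \<phi> ` B" "\<phi> ` B \<subseteq> \<phi> ` S" using z U by (auto simp: B_def)
  ultimately show "\<exists>T. openin X T \<and> x \<in> T \<and> T \<subseteq> \<phi> ` S" by blast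
qed

lemma ex_cis_eq_in_period:
  assumes "norm w = 1"
  obtains s where "a \<le> s" "s \<le> a + 2 * pi" "cis s = w"
proof -
  define k where "k = floor ((Arg w - a) / (2 * pi))"
  define s where "s = Arg w - 2 * pi * k"
  have "real_of_int k \<le> (Arg w - a) / (2 * pi)" "(Arg w - a) / (2 * pi) < real_of_int k + 1"
    unfolding k_def by linarith+
  then have "a \<le> s" "s \<le> a + 2 * pi"
    using pi_gt_zero unfolding s_def by (simp_all add: field_simps)
  moreover have "cis s = w"
  proof -
    have "cis s = cis (Arg w) / cis (2 * pi * real_of_int k)"
      unfolding s_def by (rule cis_divide[symmetric])
    also have "\<dots> = w" using cis_Arg[of w] assms by (cases "w = 0") (auto simp: sgn_eq)
    finally show ?thesis .
  qed
  ultimately show ?thesis using that by blast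
qed

lemma ex_subinterval_containing:
  fixes \<theta> :: "nat \<Rightarrow> real"
  assumes "\<And>i. i < n \<Longrightarrow> \<theta> i \<le> \<theta> (Suc i)" "\<theta> 0 \<le> s" "s \<le> \<theta> n" "0 < n"
  shows "\<exists>i<n. \<theta> i \<le> s \<and> s \<le> \<theta> (Suc i)"
  using assms
proof (induction n)
  case (Suc n)
  show ?case
  proof (cases "0 < n \<and> s \<le> \<theta> n")
    case True then show ?thesis using Suc by (metis less_SucI)
  next
    case False
    then have "\<theta> n \<le> s" using Suc.prems(2) by (cases "n = 0") auto
    then show ?thesis using Suc.prems(3) by blast
  qed
qed simp

lemma boundary_path_set_eq:
  assumes "boundary_is_path E h t eg \<phi> bd"
  shows "path_set eg bd = \<phi> ` sphere 0 1"
proof -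
  obtain \<theta> :: "nat \<Rightarrow> real" where \<theta>: "\<theta> (length bd) = \<theta> 0 + 2 * pi"
    and arcs: "\<And>i. i < length bd \<Longrightarrow> \<theta> i < \<theta> (Suc i) \<and>
           (\<exists>r. r ` {\<theta> i..\<theta> (Suc i)} = {0..1} \<and>
                (\<forall>s\<in>{\<theta> i..\<theta> (Suc i)}. \<phi> (cis s) = eg (bd ! i) (r s)))"
    using assms unfolding boundary_is_path_def by meson
  have "0 < length bd"
    using assms unfolding boundary_is_path_def is_closed_path_def is_path_def by auto
  have edge: "edge_set eg (bd ! i) = \<phi> ` cis ` {\<theta> i..\<theta> (Suc i)}" if i: "i < length bd" for i
  proof -
    obtain r where r: "r ` {\<theta> i..\<theta> (Suc i)} = {0..1}"
      "\<forall>s\<in>{\<theta> i..\<theta> (Suc i)}. \<phi> (cis s) = eg (bd ! i) (r s)"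
      using arcs[OF i] by blast
    have "edge_set eg (bd ! i) = (\<lambda>s. eg (bd ! i) (r s)) ` {\<theta> i..\<theta> (Suc i)}"
      unfolding edge_set_def r(1)[symmetric] image_image ..
    also have "\<dots> = (\<lambda>s. \<phi> (cis s)) ` {\<theta> i..\<theta> (Suc i)}"
      using r(2) by (intro image_cong) auto
    finally show ?thesis by (simp add: image_image)
  qed
  show ?thesis
  proof (intro equalityI subsetI)
    fix y assume "y \<in> path_set eg bd"
    then obtain i where "i < length bd" "y \<in> edge_set eg (bd ! i)"
      unfolding path_set_def by (metis UN_E in_set_conv_nth)
    then show "y \<in> \<phi> ` sphere 0 1" using edge by auto
  next
    fix y assume "y \<in> \<phi> ` sphere 0 1"
    then obtain w where w: "norm w = 1" "y = \<phi> w" by auto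
    then obtain s where s: "\<theta> 0 \<le> s" "s \<le> \<theta> (length bd)" "cis s = w"
      using \<theta> by (metis ex_cis_eq_in_period)
    then obtain i where "i < length bd" "s \<in> {\<theta> i..\<theta> (Suc i)}"
      using ex_subinterval_containing[of "length bd" \<theta> s] arcs \<open>0 < length bd\<close>
      by (meson atLeastAtMost_iff less_imp_le)
    then show "y \<in> path_set eg bd"
      using edge s w unfolding path_set_def by (metis UN_I image_eqI nth_mem)
  qed
qed

lemma embedded_graph_edge:
  assumes "embedded_graph X V E h t pos eg" "e \<in> E"
  shows "continuous_map (top_of_set {0..1}) X (eg e)" "eg e 0 = pos (t e)" "eg e 1 = pos (h e)"
    "t e \<in> V" "h e \<in> V"
  using assms unfolding embedded_graph_def by auto

lemma embedded_graph_edge_set_eq: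
  assumes "embedded_graph X V E h t pos eg" "e \<in> E"
  shows "edge_set eg e = {pos (t e), pos (h e)} \<union> eg e ` {0<..<1}"
proof -
  have "{0..1::real} = {0, 1} \<union> {0<..<1}" by auto
  then show ?thesis using assms unfolding edge_set_def embedded_graph_def by auto
qed

lemma embedded_graph_vertex_in_path_set:
  assumes G: "embedded_graph X V E h t pos eg" and "set es \<subseteq> E" "v \<in> V"
    and "pos v \<in> path_set eg es"
  shows "\<exists>e\<in>set es. v = t e \<or> v = h e"
proof -
  obtain e where e: "e \<in> set es" "pos v \<in> edge_set eg e"
    using assms(4) unfolding path_set_def by blast
  then have "e \<in> E" using assms(2) by blast
  then have "eg e ` {0<..<1} \<inter> pos ` V = {}" "t e \<in> V" "h e \<in> V" "inj_on pos V"
    using G unfolding embedded_graph_def by auto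
  moreover have "pos v = pos (t e) \<or> pos v = pos (h e) \<or> pos v \<in> eg e ` {0<..<1}"
    using e(2) embedded_graph_edge_set_eq[OF G \<open>e \<in> E\<close>] by blast
  ultimately have "v = t e \<or> v = h e"
    using \<open>v \<in> V\<close> by (metis disjoint_iff image_eqI inj_onD)
  then show ?thesis using e(1) by blast
qed

lemma embedded_graph_open_arc_disjoint_path_set:
  assumes G: "embedded_graph X V E h t pos eg" and "e \<in> E" "set es \<subseteq> E" "e \<notin> set es"
  shows "eg e ` {0<..<1} \<inter> path_set eg es = {}"
proof -
  have "eg e ` {0<..<1} \<inter> edge_set eg e' = {}" if "e' \<in> set es" for e'
  proof -
    have "e' \<in> E" "e' \<noteq> e" using that assms(3,4) by auto
    then have "eg e ` {0<..<1} \<inter> eg e' ` {0<..<1} = {}" "eg e ` {0<..<1} \<inter> pos ` V = {}"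
      "t e' \<in> V" "h e' \<in> V"
      using G \<open>e \<in> E\<close> unfolding embedded_graph_def by auto
    then show ?thesis
      unfolding embedded_graph_edge_set_eq[OF G \<open>e' \<in> E\<close>] by (auto simp: disjoint_iff)
  qed
  then show ?thesis unfolding path_set_def Int_UN_distrib by simp
qed

section \<open>Walks and cycles in a digraph\<close>

definition edge_rel :: "'e set \<Rightarrow> ('e \<Rightarrow> 'v) \<Rightarrow> ('e \<Rightarrow> 'v) \<Rightarrow> 'v rel" where
  "edge_rel F h t = {(t e, h e) | e. e \<in> F}"

lemma edge_rel_mono: "F \<subseteq> F' \<Longrightarrow> edge_rel F h t \<subseteq> edge_rel F' h t"
  unfolding edge_rel_def by blast

lemma rtrancl_edge_rel_swap: "(u, v) \<in> (edge_rel F t h)\<^sup>* \<longleftrightarrow> (v, u) \<in> (edge_rel F h t)\<^sup>*"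
proof -
  have "edge_rel F t h = (edge_rel F h t)\<inverse>" unfolding edge_rel_def by blast
  then show ?thesis by (simp add: rtrancl_converse)
qed

lemma is_simple_closed_path_mono:
  "is_simple_closed_path F h t es \<Longrightarrow> F \<subseteq> E \<Longrightarrow> is_simple_closed_path E h t es"
  unfolding is_simple_closed_path_def is_closed_path_def is_path_def by blast

fun is_walk :: "('e \<Rightarrow> 'v) \<Rightarrow> ('e \<Rightarrow> 'v) \<Rightarrow> 'v \<Rightarrow> 'e list \<Rightarrow> 'v \<Rightarrow> bool" where
  "is_walk h t u [] w \<longleftrightarrow> u = w"
| "is_walk h t u (e # es) w \<longleftrightarrow> t e = u \<and> is_walk h t (h e) es w"

lemma is_walk_drop:
  "is_walk h t u es w \<Longrightarrow> k < length es \<Longrightarrow> is_walk h t (t (es ! k)) (drop k es) w"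
proof (induction es arbitrary: u k)
  case (Cons e es)
  then show ?case by (cases k) auto
qed simp

lemma is_walk_imp_path:
  "is_walk h t u es w \<Longrightarrow> es \<noteq> [] \<Longrightarrow> set es \<subseteq> E \<Longrightarrow>
     is_path E h t es \<and> t (hd es) = u \<and> h (last es) = w"
proof (induction es arbitrary: u)
  case (Cons e es)
  show ?case
  proof (cases "es = []")
    case False
    then have "is_path E h t es" "t (hd es) = h e" "h (last es) = w"
      using Cons by auto
    then show ?thesis using Cons.prems False
      unfolding is_path_def by (auto simp: nth_Cons' hd_conv_nth)
  qed (use Cons.prems in \<open>auto simp: is_path_def\<close>)
qed simp

lemma rtrancl_edge_rel_imp_simple_walk:
  assumes "(u, w) \<in> (edge_rel F h t)\<^sup>*"
  shows "\<exists>es. set es \<subseteq> F \<and> is_walk h t u es w \<and> distinct (map t es) \<and> w \<notin> t ` set es"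
  using assms
proof (induction rule: converse_rtrancl_induct)
  case base
  show ?case by (intro exI[of _ "[]"]) simp
next
  case (step u y)
  then obtain e where e: "e \<in> F" "t e = u" "h e = y" by (auto simp: edge_rel_def)
  from step.IH obtain es where es: "set es \<subseteq> F" "is_walk h t y es w"
    "distinct (map t es)" "w \<notin> t ` set es" by blast
  show ?case
  proof (cases "u \<in> t ` set es")
    case True
    \<comment> \<open>shortcut the walk at the vertex u it revisits\<close>
    then obtain k where k: "k < length es" "t (es ! k) = u" by (metis imageE in_set_conv_nth)
    have "is_walk h t u (drop k es) w" using is_walk_drop[OF es(2) k(1)] k(2) by simp
    moreover have "set (drop k es) \<subseteq> F" using es(1) set_drop_subset by fast
    moreover have "distinct (map t (drop k es))" using es(3) by (simp add: drop_map[symmetric])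
    moreover have "w \<notin> t ` set (drop k es)" using es(4) set_drop_subset by fast
    ultimately show ?thesis by blast
  next
    case False
    then show ?thesis
    proof (cases "u = w")
      case True then show ?thesis by (intro exI[of _ "[]"]) simp
    next
      case False
      then show ?thesis using e es \<open>u \<notin> t ` set es\<close> by (intro exI[of _ "e # es"]) auto
    qed
  qed
qed

lemma closed_path_heads_in_tails:
  assumes "is_closed_path E h t es" "e \<in> set es"
  shows "h e \<in> t ` set es"
proof -
  obtain i where i: "i < length es" "e = es ! i" using assms(2) by (metis in_set_conv_nth)
  show ?thesis
  proof (cases "Suc i < length es")
    case True then show ?thesis using assms(1) i unfolding is_closed_path_def is_path_def by auto
  next
    case False
    then have "i = length es - 1" using i(1) by simp
    moreover have "es \<noteq> []" using i(1) by auto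
    ultimately have "e = last es" using i(2) by (simp add: last_conv_nth)
    then show ?thesis using assms(1) unfolding is_closed_path_def is_path_def by auto
  qed
qed

lemma closed_path_tails_strongly_connected:
  assumes "is_closed_path E h t es" "u \<in> t ` set es" "v \<in> t ` set es"
  shows "(u, v) \<in> (edge_rel (set es) h t)\<^sup>*"
proof -
  let ?R = "edge_rel (set es) h t"
  have es: "es \<noteq> []" "\<And>i. Suc i < length es \<Longrightarrow> h (es ! i) = t (es ! Suc i)"
    "h (last es) = t (hd es)"
    using assms(1) unfolding is_closed_path_def is_path_def by auto
  have step: "(t (es ! i), h (es ! i)) \<in> ?R" if "i < length es" for i
    using that unfolding edge_rel_def by auto
  have forward: "(t (es ! i), t (es ! j)) \<in> ?R\<^sup>*" if "i \<le> j" "j < length es" for i j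
    using that
  proof (induction j)
    case (Suc j)
    show ?case
    proof (cases "i = Suc j")
      case False
      then have "(t (es ! i), t (es ! j)) \<in> ?R\<^sup>*" using Suc by auto
      moreover have "(t (es ! j), t (es ! Suc j)) \<in> ?R" using step[of j] es(2)[of j] Suc.prems by simp
      ultimately show ?thesis by (rule rtrancl_into_rtrancl)
    qed simp
  qed simp
  have backward: "(t (es ! j), t (es ! 0)) \<in> ?R\<^sup>*" if "j < length es" for j
  proof -
    let ?n = "length es - 1"
    have "(t (es ! j), t (es ! ?n)) \<in> ?R\<^sup>*" using forward that by simp
    moreover have "(t (es ! ?n), h (es ! ?n)) \<in> ?R" using step es(1) by simp
    moreover have "h (es ! ?n) = t (es ! 0)" using es(1,3) by (simp add: last_conv_nth hd_conv_nth)
    ultimately show ?thesis by (metis rtrancl_into_rtrancl)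
  qed
  obtain i j where "i < length es" "j < length es" "u = t (es ! i)" "v = t (es ! j)"
    using assms(2,3) by (metis imageE in_set_conv_nth)
  then show ?thesis using backward[of i] forward[of 0 j] by (metis rtrancl_trans zero_le)
qed

lemma finite_pred_closed_imp_cycle:
  assumes "finite N" "N \<noteq> {}" "\<And>v. v \<in> N \<Longrightarrow> \<exists>u\<in>N. (u, v) \<in> Q"
  shows "\<exists>x. (x, x) \<in> Q\<^sup>+"
proof (rule ccontr)
  let ?Q = "Q \<inter> N \<times> N"
  assume "\<nexists>x. (x, x) \<in> Q\<^sup>+"
  then have "acyclic ?Q" unfolding acyclic_def by (meson Int_lower1 subsetD trancl_mono)
  moreover have "finite ?Q" using assms(1) by (simp add: finite_subset)
  ultimately have "wf ?Q" by (rule finite_acyclic_wf[rotated])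
  then obtain v where "v \<in> N" "\<forall>u. (u, v) \<in> ?Q \<longrightarrow> u \<notin> N"
    using assms(2) unfolding wf_eq_minimal by blast
  then show False using assms(3) by blast
qed

lemma cycle_imp_edge_on_cycle:
  assumes "(x, x) \<in> (edge_rel F h t)\<^sup>+"
  shows "\<exists>e\<in>F. (h e, t e) \<in> (edge_rel F h t)\<^sup>*"
proof -
  obtain z where "(x, z) \<in> (edge_rel F h t)\<^sup>*" "(z, x) \<in> edge_rel F h t"
    using assms by (metis tranclD2)
  then show ?thesis unfolding edge_rel_def by blast
qed

lemma reachable_from_rim:
  assumes "finite IV" "IE \<subseteq> F"
    and ends: "\<And>e. e \<in> IE \<Longrightarrow> t e \<in> IV \<union> BV"
    and into: "\<And>v. v \<in> IV \<Longrightarrow> \<exists>e\<in>IE. h e = v"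
    and no_cycle: "\<And>e. e \<in> IE \<Longrightarrow> (h e, t e) \<notin> (edge_rel F h t)\<^sup>*"
    and "v \<in> IV \<union> BV"
  shows "\<exists>b\<in>BV. (b, v) \<in> (edge_rel F h t)\<^sup>*"
proof (rule ccontr)
  let ?R = "edge_rel F h t"
  define N where "N = {v \<in> IV. \<not> (\<exists>b\<in>BV. (b, v) \<in> ?R\<^sup>*)}"
  assume "\<not> ?thesis"
  then have "N \<noteq> {}" using \<open>v \<in> IV \<union> BV\<close> by (auto simp: N_def)
  have pred: "\<exists>u\<in>N. (u, v) \<in> edge_rel IE h t" if v: "v \<in> N" for v
  proof -
    obtain e where e: "e \<in> IE" "h e = v" using into v by (auto simp: N_def)
    then have "(t e, v) \<in> ?R" using \<open>IE \<subseteq> F\<close> by (auto simp: edge_rel_def)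
    have unreached: "\<not> (\<exists>b\<in>BV. (b, t e) \<in> ?R\<^sup>*)"
    proof
      assume "\<exists>b\<in>BV. (b, t e) \<in> ?R\<^sup>*"
      then obtain b where "b \<in> BV" "(b, t e) \<in> ?R\<^sup>*" by blast
      then have "(b, v) \<in> ?R\<^sup>*" using \<open>(t e, v) \<in> ?R\<close> by (meson rtrancl_into_rtrancl)
      then show False using v \<open>b \<in> BV\<close> unfolding N_def by blast
    qed
    then have "t e \<in> IV" using ends[OF e(1)] by blast
    then have "t e \<in> N" using unreached unfolding N_def by blast
    then show ?thesis using e by (auto simp: edge_rel_def)
  qed
  have "finite N" using \<open>finite IV\<close> by (simp add: N_def)
  then obtain x where "(x, x) \<in> (edge_rel IE h t)\<^sup>+"
    using finite_pred_closed_imp_cycle[OF _ \<open>N \<noteq> {}\<close> pred] by metis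
  then obtain e where "e \<in> IE" "(h e, t e) \<in> (edge_rel IE h t)\<^sup>*"
    using cycle_imp_edge_on_cycle by metis
  moreover have "(edge_rel IE h t)\<^sup>* \<subseteq> ?R\<^sup>*"
    using \<open>IE \<subseteq> F\<close> by (simp add: edge_rel_mono rtrancl_mono)
  ultimately show False using no_cycle by blast
qed

lemma simple_closed_path_through_inner_edge:
  assumes "finite IV" "IE \<subseteq> F" "IE \<noteq> {}"
    and ends_t: "\<And>e. e \<in> IE \<Longrightarrow> t e \<in> IV \<union> BV"
    and ends_h: "\<And>e. e \<in> IE \<Longrightarrow> h e \<in> IV \<union> BV"
    and into: "\<And>v. v \<in> IV \<Longrightarrow> \<exists>e\<in>IE. h e = v"
    and out_of: "\<And>v. v \<in> IV \<Longrightarrow> \<exists>e\<in>IE. t e = v"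
    and rim: "\<And>b b'. b \<in> BV \<Longrightarrow> b' \<in> BV \<Longrightarrow> (b, b') \<in> (edge_rel F h t)\<^sup>*"
  shows "\<exists>es. is_simple_closed_path F h t es \<and> set es \<inter> IE \<noteq> {}"
proof -
  let ?R = "edge_rel F h t"
  have "\<exists>e\<in>IE. (h e, t e) \<in> ?R\<^sup>*"
  proof (rule ccontr)
    assume "\<not> ?thesis"
    then have cyc: "\<And>e. e \<in> IE \<Longrightarrow> (h e, t e) \<notin> ?R\<^sup>*" by simp
    have cyc_rev: "(t e, h e) \<notin> (edge_rel F t h)\<^sup>*" if "e \<in> IE" for e
      using cyc[OF that] rtrancl_edge_rel_swap[of "t e" "h e" F t h] by blast
    obtain e where e: "e \<in> IE" using \<open>IE \<noteq> {}\<close> by blast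
    obtain b where "b \<in> BV" "(b, t e) \<in> ?R\<^sup>*"
      using reachable_from_rim[OF assms(1,2) ends_t into cyc ends_t[OF e]] by blast
    \<comment> \<open>the same argument with the orientation of all edges reversed\<close>
    moreover obtain b' where "b' \<in> BV" "(b', h e) \<in> (edge_rel F t h)\<^sup>*"
      using reachable_from_rim[OF assms(1,2) ends_h out_of cyc_rev ends_h[OF e]] by blast
    moreover have "(h e, b') \<in> ?R\<^sup>*"
      using rtrancl_edge_rel_swap[of b' "h e" F t h] calculation(4) by blast
    ultimately have "(h e, t e) \<in> ?R\<^sup>*"
      using rim by (meson rtrancl_trans)
    then show False using cyc[OF e] by contradiction
  qed
  then obtain e es where e: "e \<in> IE" and es: "set es \<subseteq> F" "is_walk h t (h e) es (t e)"
    "distinct (map t es)" "t e \<notin> t ` set es"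
    by (metis rtrancl_edge_rel_imp_simple_walk)
  have "is_walk h t (t e) (e # es) (t e)" using es(2) by simp
  moreover have "set (e # es) \<subseteq> F" using e es(1) \<open>IE \<subseteq> F\<close> by auto
  ultimately have "is_path F h t (e # es)" "h (last (e # es)) = t (hd (e # es))"
    using is_walk_imp_path[of h t "t e" "e # es" "t e" F] by simp_all
  moreover have "distinct (map t (e # es))" using es(3,4) by simp
  ultimately have "is_simple_closed_path F h t (e # es)"
    unfolding is_simple_closed_path_def is_closed_path_def by blast
  then show ?thesis using e by (intro exI[of _ "e # es"]) auto
qed

section \<open>A disk bounded by a closed path of an embedded graph\<close>

locale graph_bounded_disk =
  fixes X :: "'a topology"
    and V :: "'v set" and E :: "'e set" and h t :: "'e \<Rightarrow> 'v"
    and pos :: "'v \<Rightarrow> 'a" and eg :: "'e \<Rightarrow> real \<Rightarrow> 'a"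
    and \<phi> :: "complex \<Rightarrow> 'a" and bd :: "'e list"
  assumes surface: "surface_with_boundary X"
    and graph: "embedded_graph X V E h t pos eg"
    and disk: "embedded_disk X \<phi>"
    and boundary: "boundary_is_path E h t eg \<phi> bd"
begin

definition inner_vertices :: "'v set" where
  "inner_vertices = {v \<in> V. pos v \<in> \<phi> ` ball 0 1}"

definition inner_edges :: "'e set" where
  "inner_edges = {e \<in> E. eg e ` {0<..<1} \<subseteq> \<phi> ` ball 0 1}"

definition rim_vertices :: "'v set" where
  "rim_vertices = t ` set bd"

lemma openin_disk_interior: "openin X (\<phi> ` ball 0 1)"
proof (rule openin_image_into_surface[OF surface _ _ open_ball])
  show "continuous_map (top_of_set (ball 0 1)) X \<phi>"
    using embedded_disk_imp_continuous_map[OF disk] continuous_map_from_subtopology_mono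
    by (metis ball_subset_cball)
  show "inj_on \<phi> (ball 0 1)"
    using embedded_disk_imp_inj_on[OF disk] by (rule inj_on_subset) auto
qed

lemma closedin_disk: "closedin X (\<phi> ` cball 0 1)"
  using closedin_embedded_disk[OF _ disk] surface by (simp add: surface_with_boundary_def)

lemma disk_eq_interior_Un_rim: "\<phi> ` cball 0 1 = \<phi> ` ball 0 1 \<union> \<phi> ` sphere 0 1"
proof -
  have "cball (0::complex) 1 = ball 0 1 \<union> sphere 0 1" by auto
  then show ?thesis by (simp add: image_Un)
qed

lemma disk_interior_Int_rim: "\<phi> ` ball 0 1 \<inter> \<phi> ` sphere 0 1 = {}"
proof -
  have "\<phi> ` ball 0 1 \<inter> \<phi> ` sphere 0 1 = \<phi> ` (ball 0 1 \<inter> sphere 0 1)"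
    using embedded_disk_imp_inj_on[OF disk] by (intro inj_on_image_Int[symmetric]) auto
  then show ?thesis by auto
qed

lemma boundary_closed_path: "is_closed_path E h t bd"
  using boundary by (simp add: boundary_is_path_def)

lemma boundary_edges: "set bd \<subseteq> E"
  using boundary_closed_path by (simp add: is_closed_path_def is_path_def)

lemma rim_eq_boundary_path_set: "\<phi> ` sphere 0 1 = path_set eg bd"
  using boundary_path_set_eq[OF boundary] by simp

lemma vertex_on_rim_imp_rim_vertex:
  assumes "v \<in> V" "pos v \<in> \<phi> ` sphere 0 1"
  shows "v \<in> rim_vertices"
proof -
  obtain e where "e \<in> set bd" "v = t e \<or> v = h e"
    using embedded_graph_vertex_in_path_set[OF graph boundary_edges assms(1)] assms(2)
    unfolding rim_eq_boundary_path_set by blast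
  then show ?thesis
    using closed_path_heads_in_tails[OF boundary_closed_path] unfolding rim_vertices_def by blast
qed

lemma edge_meeting_disk_interior_is_inner:
  assumes "e \<in> E" "eg e ` {0<..<1} \<inter> \<phi> ` ball 0 1 \<noteq> {}"
  shows "e \<in> inner_edges"
proof -
  note arc = embedded_graph_edge(1)[OF graph assms(1)]
  have "e \<notin> set bd"
  proof
    assume "e \<in> set bd"
    then have "eg e ` {0<..<1} \<subseteq> \<phi> ` sphere 0 1"
      unfolding rim_eq_boundary_path_set path_set_def edge_set_def by fastforce
    then show False using assms(2) disk_interior_Int_rim by blast
  qed
  then have "eg e ` {0<..<1} \<inter> \<phi> ` sphere 0 1 = {}"
    using embedded_graph_open_arc_disjoint_path_set[OF graph assms(1) boundary_edges]
    unfolding rim_eq_boundary_path_set by blast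
  then have "eg e ` {0<..<1} \<inter> (\<phi> ` cball 0 1 - \<phi> ` ball 0 1) = {}"
    unfolding disk_eq_interior_Un_rim by blast
  then have "eg e ` {0<..<1} \<subseteq> \<phi> ` ball 0 1"
    using connectedin_subset_openin_of_rim_disjoint[OF openin_disk_interior closedin_disk _
        connectedin_open_arc[OF arc]] assms(2)
    by (metis Int_commute ball_subset_cball image_mono)
  then show ?thesis using assms(1) by (simp add: inner_edges_def)
qed

lemma edge_at_inner_vertex_is_inner:
  assumes "e \<in> E" "t e \<in> inner_vertices \<or> h e \<in> inner_vertices"
  shows "e \<in> inner_edges"
proof -
  note arc = embedded_graph_edge(1-3)[OF graph assms(1)]
  obtain s :: real where "s \<in> {0..1}" "eg e s \<in> \<phi> ` ball 0 1"
  proof (cases "t e \<in> inner_vertices")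
    case True then show ?thesis using that[of 0] arc(2) by (simp add: inner_vertices_def)
  next
    case False then show ?thesis using that[of 1] assms(2) arc(3) by (auto simp: inner_vertices_def)
  qed
  then have "eg e ` {0<..<1} \<inter> \<phi> ` ball 0 1 \<noteq> {}"
    by (rule open_arc_meets_openin[OF arc(1) openin_disk_interior])
  then show ?thesis by (rule edge_meeting_disk_interior_is_inner[OF assms(1)])
qed

lemma inner_edge_in_disk:
  assumes "e \<in> inner_edges"
  shows "edge_set eg e \<subseteq> \<phi> ` cball 0 1"
proof -
  have "e \<in> E" "eg e ` {0<..<1} \<subseteq> \<phi> ` ball 0 1" using assms by (auto simp: inner_edges_def)
  then have "eg e ` {0<..<1} \<subseteq> \<phi> ` cball 0 1" by (metis ball_subset_cball image_mono subset_trans)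
  then show ?thesis unfolding edge_set_def
    by (rule closedin_contains_arc_of_open_arc[OF embedded_graph_edge(1)[OF graph \<open>e \<in> E\<close>] closedin_disk])
qed

lemma inner_edge_ends:
  assumes "e \<in> inner_edges"
  shows "t e \<in> inner_vertices \<union> rim_vertices" "h e \<in> inner_vertices \<union> rim_vertices"
proof -
  have "e \<in> E" using assms by (simp add: inner_edges_def)
  then have "t e \<in> V" "h e \<in> V" "pos (t e) \<in> edge_set eg e" "pos (h e) \<in> edge_set eg e"
    using embedded_graph_edge(4,5)[OF graph] embedded_graph_edge_set_eq[OF graph] by auto
  then show "t e \<in> inner_vertices \<union> rim_vertices" "h e \<in> inner_vertices \<union> rim_vertices"
    using inner_edge_in_disk[OF assms] vertex_on_rim_imp_rim_vertex
    unfolding disk_eq_interior_Un_rim inner_vertices_def by blast+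
qed

lemma inner_edges_nonempty:
  assumes out: "\<And>v. v \<in> V \<Longrightarrow> \<exists>e\<in>E. t e = v"
    and meets: "\<phi> ` ball 0 1 \<inter> graph_set V E pos eg \<noteq> {}"
  shows "inner_edges \<noteq> {}"
proof -
  have at_vertex: "inner_edges \<noteq> {}" if "v \<in> V" "pos v \<in> \<phi> ` ball 0 1" for v
  proof -
    obtain e where "e \<in> E" "t e = v" using out \<open>v \<in> V\<close> by blast
    then have "e \<in> inner_edges"
      using edge_at_inner_vertex_is_inner that by (simp add: inner_vertices_def)
    then show ?thesis by blast
  qed
  obtain p where p: "p \<in> \<phi> ` ball 0 1" "p \<in> graph_set V E pos eg" using meets by blast
  then consider (vertex) v where "v \<in> V" "p = pos v"
    | (edge) e where "e \<in> E" "p \<in> edge_set eg e"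
    unfolding graph_set_def by blast
  then show ?thesis
  proof cases
    case vertex
    then show ?thesis using at_vertex p(1) by blast
  next
    case edge
    note ends = embedded_graph_edge(4,5)[OF graph edge(1)]
    consider "p = pos (t e)" | "p = pos (h e)" | "p \<in> eg e ` {0<..<1}"
      using edge(2) embedded_graph_edge_set_eq[OF graph edge(1)] by blast
    then show ?thesis
    proof cases
      case 3
      then have "e \<in> inner_edges"
        using edge_meeting_disk_interior_is_inner[OF edge(1)] p(1) by blast
      then show ?thesis by blast
    qed (use at_vertex ends p(1) in blast)+
  qed
qed

lemma rim_vertices_strongly_connected:
  assumes "b \<in> rim_vertices" "b' \<in> rim_vertices"
  shows "(b, b') \<in> (edge_rel (inner_edges \<union> set bd) h t)\<^sup>*"
proof -
  have "(b, b') \<in> (edge_rel (set bd) h t)\<^sup>*"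
    using closed_path_tails_strongly_connected[OF boundary_closed_path] assms
    unfolding rim_vertices_def by blast
  moreover have "edge_rel (set bd) h t \<subseteq> edge_rel (inner_edges \<union> set bd) h t"
    by (rule edge_rel_mono) blast
  ultimately show ?thesis using rtrancl_mono by blast
qed

lemma path_set_in_disk:
  assumes "set es \<subseteq> inner_edges \<union> set bd"
  shows "path_set eg es \<subseteq> \<phi> ` cball 0 1"
proof -
  have "edge_set eg e \<subseteq> \<phi> ` cball 0 1" if "e \<in> set bd" for e
    using that disk_eq_interior_Un_rim unfolding rim_eq_boundary_path_set path_set_def by blast
  then show ?thesis using assms inner_edge_in_disk unfolding path_set_def by blast
qed

lemma path_set_through_inner_edge_neq_rim:
  assumes "e \<in> set es" "e \<in> inner_edges"
  shows "path_set eg es \<noteq> \<phi> ` sphere 0 1"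
proof -
  have "eg e (1/2) \<in> \<phi> ` ball 0 1" using assms(2) by (auto simp: inner_edges_def)
  moreover have "eg e (1/2) \<in> path_set eg es"
    using assms(1) unfolding path_set_def edge_set_def by force
  ultimately show ?thesis using disk_interior_Int_rim by blast
qed

lemma simple_closed_path_in_disk:
  assumes into: "\<And>v. v \<in> V \<Longrightarrow> \<exists>e\<in>E. h e = v"
    and out: "\<And>v. v \<in> V \<Longrightarrow> \<exists>e\<in>E. t e = v"
    and meets: "\<phi> ` ball 0 1 \<inter> graph_set V E pos eg \<noteq> {}"
  shows "\<exists>es. is_simple_closed_path E h t es \<and> path_set eg es \<subseteq> \<phi> ` cball 0 1 \<and>
           path_set eg es \<noteq> \<phi> ` sphere 0 1"
proof -
  have "finite inner_vertices" using graph by (simp add: inner_vertices_def embedded_graph_def)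
  moreover have "\<exists>e\<in>inner_edges. h e = v" "\<exists>e\<in>inner_edges. t e = v" if "v \<in> inner_vertices" for v
    using into out edge_at_inner_vertex_is_inner that by (metis inner_vertices_def mem_Collect_eq)+
  ultimately obtain es e where es: "is_simple_closed_path (inner_edges \<union> set bd) h t es"
    and e: "e \<in> set es" "e \<in> inner_edges"
    using simple_closed_path_through_inner_edge[of inner_vertices inner_edges
        "inner_edges \<union> set bd" t rim_vertices h]
      inner_edges_nonempty[OF out meets] inner_edge_ends rim_vertices_strongly_connected
    by blast
  have "set es \<subseteq> inner_edges \<union> set bd"
    using es by (simp add: is_simple_closed_path_def is_closed_path_def is_path_def)
  moreover have "inner_edges \<union> set bd \<subseteq> E" using boundary_edges by (auto simp: inner_edges_def)
  ultimately show ?thesis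
    using is_simple_closed_path_mono[OF es] path_set_in_disk path_set_through_inner_edge_neq_rim[OF e]
    by blast
qed

end

theorem lemma3p14:
  fixes X :: "'a topology"
    and V :: "'v set" and E :: "'e set" and h t :: "'e \<Rightarrow> 'v"
    and pos :: "'v \<Rightarrow> 'a" and eg :: "'e \<Rightarrow> real \<Rightarrow> 'a"
    and \<phi> :: "complex \<Rightarrow> 'a" and bd :: "'e list"
  assumes "riemann_surface_with_boundary X"
    and "embedded_graph X V E h t pos eg"
    and "graph_connected V E h t"
    and "\<forall>v\<in>V. card {e\<in>E. h e = v} \<ge> 1 \<and> card {e\<in>E. t e = v} \<ge> 1"
    and "embedded_disk X \<phi>"
    and "boundary_is_path E h t eg \<phi> bd"
    and "\<phi> ` ball 0 1 \<inter> graph_set V E pos eg \<noteq> {}"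
  shows "\<exists>es. is_simple_closed_path E h t es \<and> path_set eg es \<subseteq> \<phi> ` cball 0 1 \<and>
              path_set eg es \<noteq> \<phi> ` sphere 0 1"
proof -
  interpret graph_bounded_disk X V E h t pos eg \<phi> bd
    using assms(1,2,5,6) by unfold_locales (simp_all add: riemann_surface_with_boundary_def)
  have "{e \<in> E. h e = v} \<noteq> {}" "{e \<in> E. t e = v} \<noteq> {}" if "v \<in> V" for v
    using assms(4) that by (metis card.empty not_one_le_zero)+
  then have into: "\<And>v. v \<in> V \<Longrightarrow> \<exists>e\<in>E. h e = v" and out: "\<And>v. v \<in> V \<Longrightarrow> \<exists>e\<in>E. t e = v"
    by blast+
  show ?thesis by (rule simple_closed_path_in_disk[OF into out assms(7)])
qed

end
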